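(* There exist constants $c_1,c_2>0$ (depending only on $d$) such that for all $z,z'\in\mathbb{R}^{2d+1}$: if $c_1\min\{\|z'\|,\|(z')^{-1}\|\}\le\|z\|$, then $c_2\|z\|\le\min\{\|z\circ z'\|,\|z'\circ z\|\}$.
   Context: Let $d\ge1$. Points of $\mathbb{R}^{2d+1}$ are $z=(x,y,t)$ with $x,y\in\mathbb{R}^d$, $t\in\mathbb{R}$. Group law: $(x',y',t')\circ(x,y,t)=(x+x'+ty',y+y',t+t')$; inverse $(x,y,t)^{-1}=(-x+ty,-y,-t)$. Quasi-norm $\|z\|=|x|^{1/3}+|y|+|t|^{1/2}$. *)

theory Defs
  imports "HOL-Analysis.Analysis"
begin

text \<open>Points of R^(2d+1) as triples (x, y, t) with x, y in real^'n (d = CARD('n)), t real.\<close>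

definition hmul :: "((real^'n) \<times> (real^'n) \<times> real) \<Rightarrow> ((real^'n) \<times> (real^'n) \<times> real) \<Rightarrow> ((real^'n) \<times> (real^'n) \<times> real)"
  where "hmul z' z = (case z' of (x', y', t') \<Rightarrow> case z of (x, y, t) \<Rightarrow>
           (x + x' + t *\<^sub>R y', y + y', t + t'))"

definition hinv :: "((real^'n) \<times> (real^'n) \<times> real) \<Rightarrow> ((real^'n) \<times> (real^'n) \<times> real)"
  where "hinv z = (case z of (x, y, t) \<Rightarrow> (- x + t *\<^sub>R y, - y, - t))"

definition qnorm :: "((real^'n) \<times> (real^'n) \<times> real) \<Rightarrow> real"
  where "qnorm z = (case z of (x, y, t) \<Rightarrow> root 3 (norm x) + norm y + sqrt \<bar>t\<bar>)"

end

theory Submission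
  imports Defs
begin

text \<open>The quasi-norm satisfies \<open>\<parallel>z' \<circ> z\<parallel> \<le> 2 (\<parallel>z'\<parallel> + \<parallel>z\<parallel>)\<close> and
  \<open>\<parallel>z\<^sup>-\<^sup>1\<parallel> \<le> 2 \<parallel>z\<parallel>\<close>: the only non-obvious term is the twisted coordinate \<open>t y'\<close>,
  whose cube root is at most \<open>\<bar>t\<bar>\<^sup>1\<^sup>/\<^sup>2 + \<bar>y'\<bar>\<close> by AM-GM.
  Writing \<open>z = (z \<circ> z') \<circ> z'\<^sup>-\<^sup>1 = z'\<^sup>-\<^sup>1 \<circ> (z' \<circ> z)\<close> then gives
  \<open>\<parallel>z\<parallel> \<le> 2 \<parallel>z \<circ> z'\<parallel> + 4 min {\<parallel>z'\<parallel>, \<parallel>z'\<^sup>-\<^sup>1\<parallel>}\<close> and the same for \<open>z' \<circ> z\<close>,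
  so \<open>c\<^sub>1 = 8\<close> and \<open>c\<^sub>2 = 1/4\<close> work.\<close>

lemma power_add_le_power_add:
  fixes u v :: real
  assumes "n > 0" "0 \<le> u" "0 \<le> v"
  shows "u ^ n + v ^ n \<le> (u + v) ^ n"
  using \<open>n > 0\<close>
proof (induction n rule: nat_induct_non_zero)
  case 1
  then show ?case by simp
next
  case (Suc n)
  have "u ^ Suc n + v ^ Suc n \<le> (u + v) * (u ^ n + v ^ n)"
    using assms(2,3) by (simp add: algebra_simps)
  also have "\<dots> \<le> (u + v) * (u + v) ^ n"
    using Suc.IH assms(2,3) by (simp add: mult_left_mono)
  finally show ?case by simp
qed

lemma real_root_add_le:
  assumes "n > 0" "0 \<le> a" "0 \<le> b"
  shows "root n (a + b) \<le> root n a + root n b"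
proof -
  have "a + b = (root n a) ^ n + (root n b) ^ n"
    using assms by (simp add: real_root_pow_pos2)
  also have "\<dots> \<le> (root n a + root n b) ^ n"
    using assms by (intro power_add_le_power_add) auto
  finally have "root n (a + b) \<le> root n ((root n a + root n b) ^ n)"
    using assms(1) by (simp add: real_root_le_iff)
  then show ?thesis
    using assms by (simp add: real_root_power_cancel)
qed

lemma root3_square_mult_le:
  fixes s r :: real
  assumes "0 \<le> s" "0 \<le> r"
  shows "root 3 (s\<^sup>2 * r) \<le> s + r"
proof -
  have "s\<^sup>2 * r \<le> (s + r) ^ 3"
    using assms by (simp add: power3_eq_cube power2_eq_square algebra_simps)
  then have "root 3 (s\<^sup>2 * r) \<le> root 3 ((s + r) ^ 3)"
    by (simp add: real_root_le_iff)
  then show ?thesis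
    using assms by (simp add: real_root_power_cancel)
qed

lemma root3_norm_add_scaleR_le:
  fixes u v :: "'a::real_normed_vector"
  shows "root 3 (norm (u + t *\<^sub>R v)) \<le> root 3 (norm u) + sqrt \<bar>t\<bar> + norm v"
proof -
  have "root 3 (norm (u + t *\<^sub>R v)) \<le> root 3 (norm u + (sqrt \<bar>t\<bar>)\<^sup>2 * norm v)"
    by (simp add: real_root_le_iff norm_triangle_le)
  also have "\<dots> \<le> root 3 (norm u) + root 3 ((sqrt \<bar>t\<bar>)\<^sup>2 * norm v)"
    by (intro real_root_add_le) auto
  also have "\<dots> \<le> root 3 (norm u) + (sqrt \<bar>t\<bar> + norm v)"
    by (intro add_left_mono root3_square_mult_le) auto
  finally show ?thesis by simp
qed

lemma qnorm_nonneg: "0 \<le> qnorm z"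
  by (cases z) (auto simp: qnorm_def)

lemma qnorm_hmul_le: "qnorm (hmul z' z) \<le> 2 * (qnorm z' + qnorm z)"
proof -
  obtain x' y' t' where z': "z' = (x', y', t')" by (cases z')
  obtain x y t where z: "z = (x, y, t)" by (cases z)
  have "root 3 (norm (x + x' + t *\<^sub>R y'))
      \<le> root 3 (norm (x + x')) + sqrt \<bar>t\<bar> + norm y'"
    by (rule root3_norm_add_scaleR_le)
  also have "root 3 (norm (x + x')) \<le> root 3 (norm x + norm x')"
    by (simp add: real_root_le_iff norm_triangle_ineq)
  also have "\<dots> \<le> root 3 (norm x) + root 3 (norm x')"
    by (intro real_root_add_le) auto
  finally have x_part: "root 3 (norm (x + x' + t *\<^sub>R y'))
      \<le> root 3 (norm x) + root 3 (norm x') + sqrt \<bar>t\<bar> + norm y'" by simp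
  have y_part: "norm (y + y') \<le> norm y + norm y'"
    by (rule norm_triangle_ineq)
  have "sqrt \<bar>t + t'\<bar> \<le> sqrt (\<bar>t\<bar> + \<bar>t'\<bar>)"
    by simp
  also have "\<dots> \<le> sqrt \<bar>t\<bar> + sqrt \<bar>t'\<bar>"
    by (rule sqrt_add_le_add_sqrt) auto
  finally have t_part: "sqrt \<bar>t + t'\<bar> \<le> sqrt \<bar>t\<bar> + sqrt \<bar>t'\<bar>" .
  have "0 \<le> root 3 (norm x)" "0 \<le> root 3 (norm x')"
    "0 \<le> sqrt \<bar>t\<bar>" "0 \<le> sqrt \<bar>t'\<bar>" "0 \<le> norm y" "0 \<le> norm y'"
    by auto
  moreover have
    "qnorm (hmul z' z) = root 3 (norm (x + x' + t *\<^sub>R y')) + norm (y + y') + sqrt \<bar>t + t'\<bar>"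
    "qnorm z' = root 3 (norm x') + norm y' + sqrt \<bar>t'\<bar>"
    "qnorm z = root 3 (norm x) + norm y + sqrt \<bar>t\<bar>"
    by (simp_all add: z z' hmul_def qnorm_def)
  ultimately show ?thesis
    using x_part y_part t_part by argo
qed

lemma qnorm_hinv_le: "qnorm (hinv z) \<le> 2 * qnorm z"
proof -
  obtain x y t where z: "z = (x, y, t)" by (cases z)
  have "root 3 (norm (- x + t *\<^sub>R y)) \<le> root 3 (norm x) + sqrt \<bar>t\<bar> + norm y"
    using root3_norm_add_scaleR_le[of "- x" t y] by simp
  moreover have "0 \<le> root 3 (norm x)" "0 \<le> sqrt \<bar>t\<bar>" "0 \<le> norm y"
    by auto
  moreover have "qnorm (hinv z) = root 3 (norm (- x + t *\<^sub>R y)) + norm y + sqrt \<bar>t\<bar>"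
    "qnorm z = root 3 (norm x) + norm y + sqrt \<bar>t\<bar>"
    by (simp_all add: z hinv_def qnorm_def)
  ultimately show ?thesis
    by linarith
qed

lemma hmul_hinv_cancel_right: "hmul (hmul z z') (hinv z') = z"
  by (cases z; cases z') (simp add: hmul_def hinv_def algebra_simps)

lemma hinv_hmul_cancel_left: "hmul (hinv z') (hmul z' z) = z"
  by (cases z; cases z') (simp add: hmul_def hinv_def algebra_simps)

theorem mainTheorem6:
  shows "\<exists>c1 c2 :: real. c1 > 0 \<and> c2 > 0 \<and>
    (\<forall>(z :: (real^'n) \<times> (real^'n) \<times> real) z'.
        c1 * min (qnorm z') (qnorm (hinv z')) \<le> qnorm z \<longrightarrow>
        c2 * qnorm z \<le> min (qnorm (hmul z z')) (qnorm (hmul z' z)))"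
proof (intro exI conjI allI impI)
  fix z z' :: "(real^'n) \<times> (real^'n) \<times> real"
  assume small: "8 * min (qnorm z') (qnorm (hinv z')) \<le> qnorm z"
  have inv_le_min: "qnorm (hinv z') \<le> 2 * min (qnorm z') (qnorm (hinv z'))"
    using qnorm_hinv_le[of z'] qnorm_nonneg[of "hinv z'"] by linarith
  have right: "qnorm z \<le> 2 * (qnorm (hmul z z') + qnorm (hinv z'))"
    using qnorm_hmul_le[of "hmul z z'" "hinv z'"] by (simp add: hmul_hinv_cancel_right)
  have left: "qnorm z \<le> 2 * (qnorm (hinv z') + qnorm (hmul z' z))"
    using qnorm_hmul_le[of "hinv z'" "hmul z' z"] by (simp add: hinv_hmul_cancel_left)
  show "1/4 * qnorm z \<le> min (qnorm (hmul z z')) (qnorm (hmul z' z))"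
    using small inv_le_min right left by simp
qed auto

end
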